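(* Let $\lambda$ be a regular uncountable cardinal and $\mathcal{C}=\langle\mathcal{C}_\alpha\mid\alpha<\lambda\rangle$ a coherent sequence of length $\lambda$ (of arbitrary width). Suppose $T_0,T_1\subseteq\lambda$ are unbounded and for every $\alpha\in T_1$ there is $C\in\mathcal{C}_\alpha$ with $T_0\cap\alpha\subseteq C$. Then $\mathcal{C}$ has a weak thread.
   Context: For a set of ordinals $A$, $\mathrm{acc}(A)$ is the set of $\beta<\sup\{\alpha+1\mid\alpha\in A\}$ with $\beta=\sup(A\cap\beta)$. A coherent sequence of length $\lambda$ (of arbitrary width) is $\mathcal{C}=\langle\mathcal{C}_\alpha\mid\alpha<\lambda\rangle$ where each $\mathcal{C}_\alpha$ is a nonempty set of closed unbounded subsets of $\alpha$ (for successor $\alpha=\beta+1$, $\mathcal{C}_\alpha=\{\{\beta\}\}$), such that for all $\beta<\lambda$, $C\in\mathcal{C}_\beta$ and $\alpha\in\mathrm{acc}(C)$, $C\cap\alpha\in\mathcal{C}_\alpha$. A weak thread through $\mathcal{C}$ is a club $E\subseteq\lambda$ such that for every $\alpha\in\mathrm{acc}(E)$ there is $C\in\mathcal{C}_\alpha$ with $E\cap\alpha\subseteq C$. *)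

theory Defs
  imports Main "HOL-Library.Equipollence" "HOL-Library.Countable_Set"
begin

text \<open>Ordinals below lambda are modelled as the elements of a well-ordered type 'a;
  lambda is the order type of 'a.\<close>

definition regular_uncountable_cardinal_type :: "'a::wellorder itself \<Rightarrow> bool" where
  "regular_uncountable_cardinal_type _ \<longleftrightarrow>
     (\<forall>a::'a. {..<a} \<prec> (UNIV::'a set)) \<and>
     (\<forall>A::'a set. A \<prec> (UNIV::'a set) \<longrightarrow> (\<exists>b. \<forall>a\<in>A. a < b)) \<and>
     \<not> countable (UNIV::'a set)"

definition acc :: "'a::wellorder set \<Rightarrow> 'a set" where
  "acc A = {\<beta>. (\<exists>a\<in>A. \<beta> \<le> a) \<and> (\<forall>\<gamma><\<beta>. \<exists>a\<in>A. \<gamma> < a \<and> a < \<beta>)}"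

definition club_below :: "'a::wellorder \<Rightarrow> 'a set \<Rightarrow> bool" where
  "club_below \<alpha> C \<longleftrightarrow> C \<subseteq> {..<\<alpha>} \<and>
     (\<forall>\<gamma><\<alpha>. \<exists>c\<in>C. \<gamma> \<le> c) \<and>
     (\<forall>\<beta><\<alpha>. (\<exists>\<gamma>. \<gamma> < \<beta>) \<and> (\<forall>\<gamma><\<beta>. \<exists>c\<in>C. \<gamma> < c \<and> c < \<beta>) \<longrightarrow> \<beta> \<in> C)"

definition club :: "'a::wellorder set \<Rightarrow> bool" where
  "club C \<longleftrightarrow> (\<forall>\<gamma>. \<exists>c\<in>C. \<gamma> \<le> c) \<and>
     (\<forall>\<beta>. (\<exists>\<gamma>. \<gamma> < \<beta>) \<and> (\<forall>\<gamma><\<beta>. \<exists>c\<in>C. \<gamma> < c \<and> c < \<beta>) \<longrightarrow> \<beta> \<in> C)"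

definition unbounded :: "'a::wellorder set \<Rightarrow> bool" where
  "unbounded T \<longleftrightarrow> (\<forall>\<gamma>. \<exists>t\<in>T. \<gamma> \<le> t)"

definition coherent_seq :: "('a::wellorder \<Rightarrow> 'a set set) \<Rightarrow> bool" where
  "coherent_seq \<C> \<longleftrightarrow>
     (\<forall>\<alpha>. \<C> \<alpha> \<noteq> {} \<and> (\<forall>C\<in>\<C> \<alpha>. club_below \<alpha> C)) \<and>
     (\<forall>\<alpha> \<beta>. \<beta> < \<alpha> \<and> \<not> (\<exists>\<gamma>. \<beta> < \<gamma> \<and> \<gamma> < \<alpha>) \<longrightarrow> \<C> \<alpha> = {{\<beta>}}) \<and>
     (\<forall>\<beta>. \<forall>C\<in>\<C> \<beta>. \<forall>\<alpha>\<in>acc C. C \<inter> {..<\<alpha>} \<in> \<C> \<alpha>)"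

definition weak_thread :: "('a::wellorder \<Rightarrow> 'a set set) \<Rightarrow> 'a set \<Rightarrow> bool" where
  "weak_thread \<C> E \<longleftrightarrow> club E \<and>
     (\<forall>\<alpha>\<in>acc E. \<exists>C\<in>\<C> \<alpha>. E \<inter> {..<\<alpha>} \<subseteq> C)"

end

theory Submission
  imports Defs
begin

text \<open>Let \<open>E\<close> be the closure of \<open>T0\<close>. It is a club, and whenever \<open>C\<close> is club in \<open>t\<close> and
  contains \<open>T0 \<inter> t\<close>, closedness of \<open>C\<close> gives \<open>E \<inter> t \<subseteq> C\<close>. For \<open>\<alpha> \<in> acc E\<close> pick \<open>t \<ge> \<alpha>\<close>
  in \<open>T1\<close> with such a \<open>C \<in> \<C> t\<close>: either \<open>\<alpha> = t\<close>, or \<open>\<alpha>\<close> is an accumulation point of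
  \<open>C\<close> below \<open>t\<close> and coherence yields \<open>C \<inter> \<alpha> \<in> \<C> \<alpha>\<close>.\<close>

definition limit_point_of :: "'a::wellorder set \<Rightarrow> 'a \<Rightarrow> bool" where
  "limit_point_of A \<beta> \<longleftrightarrow> (\<exists>\<gamma>. \<gamma> < \<beta>) \<and> (\<forall>\<gamma><\<beta>. \<exists>a\<in>A. \<gamma> < a \<and> a < \<beta>)"

definition ord_closure :: "'a::wellorder set \<Rightarrow> 'a set" where
  "ord_closure A = A \<union> Collect (limit_point_of A)"

lemma limit_point_of_ord_closure:
  assumes "limit_point_of (ord_closure A) \<beta>"
  shows "limit_point_of A \<beta>"
  unfolding limit_point_of_def
proof (intro conjI allI impI)
  show "\<exists>\<gamma>. \<gamma> < \<beta>" using assms unfolding limit_point_of_def by blast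
next
  fix \<gamma> assume "\<gamma> < \<beta>"
  then obtain e where e: "e \<in> ord_closure A" "\<gamma> < e" "e < \<beta>"
    using assms unfolding limit_point_of_def by blast
  show "\<exists>a\<in>A. \<gamma> < a \<and> a < \<beta>"
  proof (cases "e \<in> A")
    case True
    then show ?thesis using e by blast
  next
    case False
    then obtain a where "a \<in> A" "\<gamma> < a" "a < e"
      using e unfolding ord_closure_def limit_point_of_def by blast
    then show ?thesis using e(3) by (meson less_trans)
  qed
qed

lemma club_ord_closure:
  assumes "unbounded T"
  shows "club (ord_closure T)"
  unfolding club_def
proof (intro conjI allI impI)
  fix \<gamma>
  show "\<exists>c\<in>ord_closure T. \<gamma> \<le> c"
    using assms unfolding unbounded_def ord_closure_def by blast
next
  fix \<beta>
  assume "(\<exists>\<gamma>. \<gamma> < \<beta>) \<and> (\<forall>\<gamma><\<beta>. \<exists>c\<in>ord_closure T. \<gamma> < c \<and> c < \<beta>)"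
  then have "limit_point_of (ord_closure T) \<beta>" unfolding limit_point_of_def .
  then have "limit_point_of T \<beta>" by (rule limit_point_of_ord_closure)
  then show "\<beta> \<in> ord_closure T" unfolding ord_closure_def by blast
qed

lemma ord_closure_subset_club_below:
  assumes C: "club_below t C" and T: "T \<inter> {..<t} \<subseteq> C"
  shows "ord_closure T \<inter> {..<t} \<subseteq> C"
proof
  fix \<beta> assume \<beta>: "\<beta> \<in> ord_closure T \<inter> {..<t}"
  show "\<beta> \<in> C"
  proof (cases "\<beta> \<in> T")
    case True
    then show ?thesis using \<beta> T by blast
  next
    case False
    then have lim: "limit_point_of T \<beta>" using \<beta> unfolding ord_closure_def by blast
    have "\<forall>\<gamma><\<beta>. \<exists>c\<in>C. \<gamma> < c \<and> c < \<beta>"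
    proof (intro allI impI)
      fix \<gamma> assume "\<gamma> < \<beta>"
      then obtain a where a: "a \<in> T" "\<gamma> < a" "a < \<beta>"
        using lim unfolding limit_point_of_def by blast
      with \<beta> have "a < t" by (meson IntD2 lessThan_iff less_trans)
      then have "a \<in> C" using a(1) T by blast
      then show "\<exists>c\<in>C. \<gamma> < c \<and> c < \<beta>" using a by blast
    qed
    moreover have "\<beta> < t" and "\<exists>\<gamma>. \<gamma> < \<beta>"
      using \<beta> lim unfolding limit_point_of_def by auto
    ultimately show ?thesis using C unfolding club_below_def by blast
  qed
qed

lemma acc_club_below:
  assumes C: "club_below t C" and "\<alpha> < t" and \<alpha>: "\<alpha> \<in> acc E" and E: "E \<inter> {..<t} \<subseteq> C"
  shows "\<alpha> \<in> acc C"
  unfolding acc_def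
proof (intro CollectI conjI allI impI)
  show "\<exists>a\<in>C. \<alpha> \<le> a" using C \<open>\<alpha> < t\<close> unfolding club_below_def by blast
next
  fix \<gamma> assume "\<gamma> < \<alpha>"
  then obtain e where e: "e \<in> E" "\<gamma> < e" "e < \<alpha>" using \<alpha> unfolding acc_def by blast
  then have "e < t" using \<open>\<alpha> < t\<close> by (meson less_trans)
  then have "e \<in> C" using e(1) E by blast
  then show "\<exists>a\<in>C. \<gamma> < a \<and> a < \<alpha>" using e by blast
qed

theorem lemma2p4:
  fixes \<C> :: "'a::wellorder \<Rightarrow> 'a set set" and T0 T1 :: "'a set"
  assumes "regular_uncountable_cardinal_type TYPE('a)"
    and "coherent_seq \<C>"
    and "unbounded T0" and "unbounded T1"
    and "\<forall>\<alpha>\<in>T1. \<exists>C\<in>\<C> \<alpha>. T0 \<inter> {..<\<alpha>} \<subseteq> C"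
  shows "\<exists>E. weak_thread \<C> E"
proof -
  define E where "E = ord_closure T0"
  have coherent: "\<And>\<alpha> C. C \<in> \<C> \<alpha> \<Longrightarrow> club_below \<alpha> C"
    "\<And>\<beta> C \<alpha>. C \<in> \<C> \<beta> \<Longrightarrow> \<alpha> \<in> acc C \<Longrightarrow> C \<inter> {..<\<alpha>} \<in> \<C> \<alpha>"
    using assms(2) unfolding coherent_seq_def by auto
  have "\<exists>C\<in>\<C> \<alpha>. E \<inter> {..<\<alpha>} \<subseteq> C" if \<alpha>: "\<alpha> \<in> acc E" for \<alpha>
  proof -
    obtain t where t: "t \<in> T1" "\<alpha> \<le> t" using assms(4) unfolding unbounded_def by blast
    obtain C where C: "C \<in> \<C> t" "T0 \<inter> {..<t} \<subseteq> C" using assms(5) t(1) by blast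
    have club_C: "club_below t C" using coherent(1) C(1) .
    have EC: "E \<inter> {..<t} \<subseteq> C"
      unfolding E_def using ord_closure_subset_club_below[OF club_C C(2)] .
    show ?thesis
    proof (cases "\<alpha> = t")
      case True
      then show ?thesis using C(1) EC by blast
    next
      case False
      with t(2) have "\<alpha> < t" by simp
      then have "C \<inter> {..<\<alpha>} \<in> \<C> \<alpha>"
        using coherent(2)[OF C(1) acc_club_below[OF club_C _ \<alpha> EC]] by blast
      moreover have "E \<inter> {..<\<alpha>} \<subseteq> C \<inter> {..<\<alpha>}" using EC \<open>\<alpha> < t\<close> by auto
      ultimately show ?thesis by blast
    qed
  qed
  then show ?thesis
    using club_ord_closure[OF assms(3)] unfolding weak_thread_def E_def by blast
qed

end
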